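(* Let $d_1,d_2\in\mathbb{Z}$ with $d_1(d_2-d_1)>0$. If $f\in\mathcal{E}_{d_1}$ satisfies $d_1(f\wedge\dot f)\ge0$ a.e. on $\mathbb{S}^1$, then $\int_{\mathbb{S}^1}|\dot f-\dot g|\ge2\pi|d_1-d_2|$ for all $g\in\mathcal{E}_{d_2}$. If moreover $d_1(f\wedge\dot f)>0$ a.e. on $\mathbb{S}^1$, then $\int_{\mathbb{S}^1}|\dot f-\dot g|>2\pi|d_1-d_2|$ for all $g\in\mathcal{E}_{d_2}$.
   Context: $W^{1,1}(\mathbb{S}^1;\mathbb{S}^1)=\{f\in W^{1,1}(\mathbb{S}^1;\mathbb{R}^2):|f|=1\}$; $\dot f$ is the arclength derivative; $\mathcal{E}_d=\{f\in W^{1,1}(\mathbb{S}^1;\mathbb{S}^1):\deg f=d\}$; for $f=(f_1,f_2)$, $f\wedge\dot f=f_1\dot f_2-f_2\dot f_1$. *)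

theory Defs
  imports "HOL-Complex_Analysis.Complex_Analysis"
begin

text \<open>Maps S^1 -> S^1 are functions on complex numbers; S^1 is parametrised by
  theta |-> cis theta, theta in [0, 2 pi].  The arclength derivative of f is a function
  df :: real => complex of theta.  f is in W^{1,1}(S^1;S^1) with weak arclength derivative df
  iff |f| = 1 on S^1, df is integrable on [0,2pi] and theta |-> f(cis theta) is the
  primitive of df (absolute continuity).\<close>

definition W11_S1 :: "(complex \<Rightarrow> complex) \<Rightarrow> (real \<Rightarrow> complex) \<Rightarrow> bool" where
  "W11_S1 f df \<longleftrightarrow>
     (\<forall>z. cmod z = 1 \<longrightarrow> cmod (f z) = 1) \<and>
     df absolutely_integrable_on {0..2*pi} \<and>
     (\<forall>t\<in>{0..2*pi}. f (cis t) = f 1 + integral {0..t} df)"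

definition deg :: "(complex \<Rightarrow> complex) \<Rightarrow> complex" where
  "deg f = winding_number (\<lambda>t. f (cis (2*pi*t))) 0"

text \<open>f wedge fdot at theta: f1 fdot2 - f2 fdot1 = Im (conj f * fdot).\<close>
definition wedge :: "(complex \<Rightarrow> complex) \<Rightarrow> (real \<Rightarrow> complex) \<Rightarrow> real \<Rightarrow> real" where
  "wedge f df t = Im (cnj (f (cis t)) * df t)"

end

theory Submission
  imports Defs
begin

text \<open>Write \<open>G t = f (cis t)\<close>; it is absolutely continuous with derivative \<open>df\<close> and has a
  continuous logarithm \<open>G = exp Q\<close> with \<open>Re Q = 0\<close> and \<open>Q (2\<pi>) - Q 0 = 2\<pi>\<i> deg f\<close>.
  Approximating on short intervals, where \<open>Q\<close> varies little, shows
  \<open>\<integral>\<^sub>u\<^sup>v cnj G df = Q v - Q u\<close> on every subinterval. Taking imaginary parts gives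
  \<open>\<integral> f \<and> df = 2\<pi> deg f\<close>; the real part vanishes on every subinterval, hence \<open>df\<close> is a.e.
  tangent to the circle and \<open>|df| = |f \<and> df|\<close>.

  With \<open>s = sgn d\<^sub>1\<close>, the sign condition gives \<open>|df| = s (f \<and> df)\<close>, while always
  \<open>|dg| \<ge> s (g \<and> dg)\<close>. Hence \<open>|df - dg| \<ge> |dg| - |df| \<ge> s (g \<and> dg) - s (f \<and> df)\<close> a.e., and
  integrating yields \<open>2\<pi> s (d\<^sub>2 - d\<^sub>1) = 2\<pi> |d\<^sub>1 - d\<^sub>2|\<close>. In case of equality all these
  inequalities are equalities a.e.; where \<open>s (f \<and> df) > 0\<close>, writing \<open>df = \<i> s x f\<close> and
  \<open>dg = \<i> s y g\<close> with \<open>x > 0\<close>, this means \<open>|x f - y g| = y - x\<close>, which forces \<open>f = g\<close>. By continuity \<open>f = g\<close> on the whole circle, contradicting \<open>d\<^sub>1 \<noteq> d\<^sub>2\<close>.\<close>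

section \<open>Integrals vanishing almost everywhere\<close>

lemma
  fixes h :: "'a::euclidean_space \<Rightarrow> real"
  assumes h: "h integrable_on S" and nonneg: "AE x in lebesgue. x \<in> S \<longrightarrow> 0 \<le> h x"
  shows integral_nonneg_AE_on: "0 \<le> integral S h"
    and AE_eq_0_if_integral_eq_0: "integral S h = 0 \<Longrightarrow> AE x in lebesgue. x \<in> S \<longrightarrow> h x = 0"
proof -
  obtain N where "negligible N" and N: "{x. \<not> (x \<in> S \<longrightarrow> 0 \<le> h x)} \<subseteq> N"
    using nonneg[unfolded eventually_ae_filter_negligible] by blast
  then have "(\<lambda>x. \<bar>h x\<bar>) integrable_on S"
    by (intro integrable_spike[OF h]) auto
  then have "h absolutely_integrable_on S"
    using h by (intro absolutely_integrable_onI) auto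
  then have int: "integrable lebesgue (\<lambda>x. indicator S x *\<^sub>R h x)"
    and eq: "integral S h = (LINT x|lebesgue. indicator S x *\<^sub>R h x)"
    by (simp_all add: set_integrable_def set_lebesgue_integral_eq_integral(2)[symmetric]
        set_lebesgue_integral_def)
  have AE_nonneg: "AE x in lebesgue. 0 \<le> indicator S x *\<^sub>R h x"
    using nonneg by eventually_elim (simp add: indicator_def)
  then show "0 \<le> integral S h"
    unfolding eq by (rule integral_nonneg_AE)
  assume "integral S h = 0"
  then have "AE x in lebesgue. indicator S x *\<^sub>R h x = 0"
    using integral_nonneg_eq_0_iff_AE[OF int AE_nonneg] eq by simp
  then show "AE x in lebesgue. x \<in> S \<longrightarrow> h x = 0"
    by eventually_elim (simp add: indicator_def)
qed

lemma integral_norm_eq_0_if_box_integrals_eq_0: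
  fixes f :: "'a::euclidean_space \<Rightarrow> 'b::euclidean_space"
  assumes f: "f absolutely_integrable_on cbox a b"
    and zero: "\<And>u v. cbox u v \<subseteq> cbox a b \<Longrightarrow> integral (cbox u v) f = 0"
  shows "integral (cbox a b) (\<lambda>x. norm (f x)) = 0"
proof -
  let ?I = "integral (cbox a b) (\<lambda>x. norm (f x))"
  have fI: "f integrable_on cbox a b" and nI: "(\<lambda>x. norm (f x)) integrable_on cbox a b"
    using f by (auto simp: absolutely_integrable_on_def)
  text \<open>A fine tagged division makes the Riemann sum of \<open>|f|\<close> close to \<open>?I\<close> and, by the
    Henstock lemma, close to \<open>\<Sum>\<^sub>K |\<integral>\<^sub>K f| = 0\<close>. Here \<open>measure lborel K\<close> is the Henstock
    content of \<open>K\<close>; the name \<open>content\<close> is taken by \<open>Polynomial.content\<close>.\<close>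
  have bound: "?I \<le> 2 * e" if "0 < e" for e
  proof -
    obtain \<gamma>1 where "gauge \<gamma>1" and \<gamma>1: "\<And>p. p tagged_partial_division_of cbox a b \<Longrightarrow> \<gamma>1 fine p \<Longrightarrow>
        (\<Sum>(x,K)\<in>p. norm (measure lborel K *\<^sub>R f x - integral K f)) < e"
      using Henstock_lemma[OF fI \<open>0 < e\<close>] by blast
    from has_integral[THEN iffD1, OF integrable_integral[OF nI], rule_format, OF \<open>0 < e\<close>]
    obtain \<gamma>2 where "gauge \<gamma>2" and \<gamma>2: "\<forall>p. p tagged_division_of cbox a b \<and> \<gamma>2 fine p \<longrightarrow>
        norm ((\<Sum>(x,K)\<in>p. measure lborel K *\<^sub>R norm (f x)) - ?I) < e"
      by blast
    obtain p where p: "p tagged_division_of cbox a b" and fine: "(\<lambda>x. \<gamma>1 x \<inter> \<gamma>2 x) fine p"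
      using fine_division_exists[OF gauge_Int[OF \<open>gauge \<gamma>1\<close> \<open>gauge \<gamma>2\<close>]] by blast
    have "(\<Sum>(x,K)\<in>p. measure lborel K *\<^sub>R norm (f x))
        = (\<Sum>(x,K)\<in>p. norm (measure lborel K *\<^sub>R f x - integral K f))"
    proof (intro sum.cong refl, clarify)
      fix x K assume "(x, K) \<in> p"
      then obtain u v where "K = cbox u v" "K \<subseteq> cbox a b"
        using p by (meson tagged_division_ofD(3,4))
      then show "measure lborel K *\<^sub>R norm (f x) = norm (measure lborel K *\<^sub>R f x - integral K f)"
        using zero by simp
    qed
    also have "\<dots> < e"
      using \<gamma>1 p fine by (simp add: tagged_division_of_def fine_Int)
    finally have "(\<Sum>(x,K)\<in>p. measure lborel K *\<^sub>R norm (f x)) < e" .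
    moreover have "norm ((\<Sum>(x,K)\<in>p. measure lborel K *\<^sub>R norm (f x)) - ?I) < e"
      using \<gamma>2 p fine by (simp add: fine_Int)
    ultimately show ?thesis unfolding real_norm_def by linarith
  qed
  have "?I \<le> 0"
  proof (rule field_le_epsilon)
    fix e :: real assume "0 < e"
    then show "?I \<le> 0 + e" using bound[of "e/2"] by simp
  qed
  moreover have "0 \<le> ?I"
    using nI by (intro integral_nonneg) auto
  ultimately show ?thesis by simp
qed

corollary AE_eq_0_if_box_integrals_eq_0:
  fixes f :: "'a::euclidean_space \<Rightarrow> 'b::euclidean_space"
  assumes "f absolutely_integrable_on cbox a b"
    and "\<And>u v. cbox u v \<subseteq> cbox a b \<Longrightarrow> integral (cbox u v) f = 0"
  shows "AE x in lebesgue. x \<in> cbox a b \<longrightarrow> f x = 0"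
proof -
  have "AE x in lebesgue. x \<in> cbox a b \<longrightarrow> norm (f x) = 0"
    using assms integral_norm_eq_0_if_box_integrals_eq_0[OF assms]
    by (intro AE_eq_0_if_integral_eq_0) (auto simp: absolutely_integrable_on_def)
  then show ?thesis by simp
qed

lemma continuous_on_eq_if_AE_eq:
  fixes f g :: "real \<Rightarrow> 'a::real_normed_vector"
  assumes "continuous_on {a..b} f" "continuous_on {a..b} g" "a < b"
    and "AE x in lebesgue. x \<in> {a..b} \<longrightarrow> f x = g x"
  shows "\<forall>x\<in>{a..b}. f x = g x"
proof -
  let ?C = "{x \<in> {a..b}. f x - g x = 0}"
  have "closed ?C"
    using assms(1,2) by (intro continuous_closed_preimage_constant continuous_on_diff) auto
  moreover have "{a<..<b} \<subseteq> ?C"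
  proof
    fix x assume "x \<in> {a<..<b}"
    moreover have "AE y \<in> {a<..<b} in lebesgue. y \<in> ?C"
      using assms(4) by eventually_elim auto
    ultimately show "x \<in> ?C"
      by (rule mem_closed_if_AE_lebesgue_open[OF open_greaterThanLessThan \<open>closed ?C\<close>, rotated])
  qed
  ultimately have "closure {a<..<b} \<subseteq> ?C"
    by (rule closure_minimal[rotated])
  then have "{a..b} \<subseteq> ?C"
    using \<open>a < b\<close> by simp
  then show ?thesis by (simp add: subset_iff)
qed

section \<open>Unit complex numbers and tangent vectors\<close>

lemma norm_exp_minus_1_minus_le:
  fixes z :: complex
  assumes "norm z \<le> 1/2"
  shows "norm (exp z - 1 - z) \<le> 3 * norm z * norm (exp z - 1)"
proof -
  have "norm ((exp z - z) - (exp 0 - 0)) \<le> 3/2 * norm z * norm (z - 0)"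
  proof (rule field_differentiable_bound[of "cball 0 (norm z)"])
    fix w :: complex assume w: "w \<in> cball 0 (norm z)"
    show "((\<lambda>w. exp w - w) has_field_derivative exp w - 1) (at w within cball 0 (norm z))"
      by (auto intro!: derivative_eq_intros)
    have "norm (exp w - 1) \<le> 3/2 * norm w"
      using w assms by (intro norm_exp_bounds(2)) simp
    also have "\<dots> \<le> 3/2 * norm z" using w by simp
    finally show "norm (exp w - 1) \<le> 3/2 * norm z" .
  qed auto
  also have "\<dots> \<le> 3/2 * norm z * (2 * norm (exp z - 1))"
    using norm_exp_bounds(1)[OF assms] by (intro mult_left_mono) auto
  finally show ?thesis by (simp add: algebra_simps)
qed

lemma tangent_eq_i_mult:
  fixes F a :: complex
  assumes "norm F = 1" and "Re (cnj F * a) = 0"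
  shows "a = \<i> * of_real (Im (cnj F * a)) * F"
proof -
  have "cnj F * a = \<i> * of_real (Im (cnj F * a))"
    using assms(2) by (simp add: complex_eq_iff)
  moreover have "F * cnj F = 1"
    using assms(1) by (simp add: complex_norm_square[symmetric] flip: of_real_power)
  ultimately show ?thesis
    by (metis mult.assoc mult.commute mult.left_neutral)
qed

lemma norm_diff_square_unit:
  fixes F G :: complex and x y :: real
  assumes "norm F = 1" "norm G = 1"
  shows "norm (of_real x * F - of_real y * G) ^ 2 = x^2 + y^2 - 2 * x * y * Re (F * cnj G)"
proof -
  have "norm (of_real x * F - of_real y * G) ^ 2
      = (x * Re F - y * Re G) ^ 2 + (x * Im F - y * Im G) ^ 2"
    by (simp add: cmod_power2)
  also have "\<dots> = x^2 * (Re F ^ 2 + Im F ^ 2) + y^2 * (Re G ^ 2 + Im G ^ 2)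
      - 2 * x * y * Re (F * cnj G)"
    by (simp add: power2_eq_square algebra_simps)
  also have "\<dots> = x^2 + y^2 - 2 * x * y * Re (F * cnj G)"
    using assms cmod_power2[of F] cmod_power2[of G] by simp
  finally show ?thesis .
qed

lemma unit_eq_if_norm_diff_le:
  fixes F G :: complex and x y :: real
  assumes F: "norm F = 1" and G: "norm G = 1" and x: "0 < x"
    and le: "norm (of_real x * F - of_real y * G) \<le> y - x"
  shows "F = G"
proof -
  have "0 < y" using x le norm_ge_zero[of "of_real x * F - of_real y * G"] by linarith
  have "(norm (of_real x * F - of_real y * G)) ^ 2 \<le> (y - x) ^ 2"
    using le by (intro power_mono) auto
  then have "x * y * (1 - Re (F * cnj G)) \<le> 0"
    unfolding norm_diff_square_unit[OF F G] by (simp add: power2_eq_square algebra_simps)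
  then have "1 \<le> Re (F * cnj G)"
    using x \<open>0 < y\<close> by (simp add: mult_le_0_iff zero_less_mult_iff)
  then have "norm (of_real 1 * F - of_real 1 * G) ^ 2 \<le> 0"
    unfolding norm_diff_square_unit[OF F G] by simp
  then show ?thesis by simp
qed

lemma norm_diff_ge_if_tangent:
  fixes F G a b :: complex and s :: real
  assumes "norm F = 1" "norm G = 1" "Re (cnj F * a) = 0" "s = 1 \<or> s = -1"
    and "0 \<le> s * Im (cnj F * a)"
  shows "s * Im (cnj G * b) - s * Im (cnj F * a) \<le> norm (a - b)"
proof -
  have "norm a = s * Im (cnj F * a)"
    using assms cmod_eq_Im[OF assms(3)] by (auto simp: norm_mult)
  moreover have "s * Im (cnj G * b) \<le> norm b"
    using abs_Im_le_cmod[of "cnj G * b"] assms by (auto simp: norm_mult)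
  ultimately show ?thesis
    using norm_triangle_ineq2[of b a] by (simp add: norm_minus_commute)
qed

lemma eq_if_tangent_norm_diff_le:
  fixes F G a b :: complex and s :: real
  assumes F: "norm F = 1" and G: "norm G = 1"
    and tangent: "Re (cnj F * a) = 0" "Re (cnj G * b) = 0" and s: "s = 1 \<or> s = -1"
    and pos: "0 < s * Im (cnj F * a)"
    and le: "norm (a - b) \<le> s * Im (cnj G * b) - s * Im (cnj F * a)"
  shows "F = G"
proof -
  define A B where "A = Im (cnj F * a)" and "B = Im (cnj G * b)"
  have a: "a = \<i> * of_real A * F" and b: "b = \<i> * of_real B * G"
    using tangent_eq_i_mult[OF F tangent(1)] tangent_eq_i_mult[OF G tangent(2)]
    by (simp_all add: A_def B_def)
  have "\<i> * of_real s * (of_real (s * A) * F - of_real (s * B) * G)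
      = \<i> * of_real (s * s) * (of_real A * F - of_real B * G)"
    by (simp add: algebra_simps)
  also have "\<dots> = a - b"
    using s by (auto simp: a b algebra_simps)
  finally have "a - b = \<i> * of_real s * (of_real (s * A) * F - of_real (s * B) * G)"
    by (rule sym)
  then have "norm (a - b) = norm (\<i> * of_real s) * norm (of_real (s * A) * F - of_real (s * B) * G)"
    by (simp only: norm_mult)
  moreover have "norm (\<i> * of_real s) = 1"
    using s by auto
  ultimately have "norm (of_real (s * A) * F - of_real (s * B) * G) = norm (a - b)"
    by simp
  with le have "norm (of_real (s * A) * F - of_real (s * B) * G) \<le> s * B - s * A"
    by (simp add: A_def B_def)
  moreover have "0 < s * A"
    using pos by (simp add: A_def)
  ultimately show ?thesis
    by (intro unit_eq_if_norm_diff_le[OF F G])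
qed

section \<open>Unimodular primitives with a continuous logarithm\<close>

locale unit_primitive_lift =
  fixes a b :: real and G \<phi> Q :: "real \<Rightarrow> complex"
  assumes integrable: "\<phi> absolutely_integrable_on {a..b}"
    and primitive: "\<And>t. t \<in> {a..b} \<Longrightarrow> G t = G a + integral {a..t} \<phi>"
    and lift: "\<And>t. t \<in> {a..b} \<Longrightarrow> G t = exp (Q t)"
    and Re_lift: "\<And>t. t \<in> {a..b} \<Longrightarrow> Re (Q t) = 0"
    and continuous_lift: "continuous_on {a..b} Q"
begin

lemma integrable_subinterval:
  assumes "a \<le> u" "v \<le> b"
  shows "\<phi> integrable_on {u..v}" "(\<lambda>t. norm (\<phi> t)) integrable_on {u..v}"
  using integrable assms
  by (auto simp: absolutely_integrable_on_def intro: integrable_on_subinterval)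

lemma G_diff:
  assumes "a \<le> u" "u \<le> v" "v \<le> b"
  shows "G v - G u = integral {u..v} \<phi>"
proof -
  have "integral {a..u} \<phi> + integral {u..v} \<phi> = integral {a..v} \<phi>"
    using assms integrable_subinterval(1)[of a v]
    by (intro Henstock_Kurzweil_Integration.integral_combine) auto
  then show ?thesis
    using assms primitive[of u] primitive[of v] by (simp add: algebra_simps)
qed

lemma norm_G_diff_le:
  assumes "a \<le> u" "u \<le> v" "v \<le> b"
  shows "norm (G v - G u) \<le> integral {u..v} (\<lambda>t. norm (\<phi> t))"
  unfolding G_diff[OF assms]
  using assms integrable_subinterval[of u v] by (intro integral_norm_bound_integral) auto

lemma norm_G: "t \<in> {a..b} \<Longrightarrow> norm (G t) = 1"
  using lift Re_lift by (simp add: norm_exp_eq_Re)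

lemma cnj_G_mult_G:
  assumes "u \<in> {a..b}" "v \<in> {a..b}"
  shows "cnj (G u) * G v = exp (Q v - Q u)"
proof -
  have "cnj (Q u) = - Q u"
    using Re_lift[OF assms(1)] by (simp add: complex_eq_iff)
  then show ?thesis
    using assms by (simp add: lift exp_cnj exp_diff exp_minus field_simps)
qed

lemma continuous_G: "continuous_on {a..b} G"
  using continuous_on_exp[OF continuous_lift] by (rule continuous_on_eq) (simp add: lift)

lemma absolutely_integrable_cnj_G_mult: "(\<lambda>t. cnj (G t) * \<phi> t) absolutely_integrable_on {a..b}"
proof -
  have "continuous_on {a..b} (\<lambda>t. cnj (G t))"
    using continuous_G by (intro continuous_intros)
  then have "bounded ((\<lambda>t. cnj (G t)) ` {a..b})"
    and "(\<lambda>t. cnj (G t)) \<in> borel_measurable (lebesgue_on {a..b})"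
    by (auto intro: compact_imp_bounded compact_continuous_image
        continuous_imp_measurable_on_sets_lebesgue)
  then show ?thesis
    using absolutely_integrable_bounded_measurable_product[OF bilinear_times _ _ _ integrable]
    by auto
qed

lemma integrable_cnj_G_mult:
  assumes "a \<le> u" "v \<le> b"
  shows "(\<lambda>t. cnj (G t) * \<phi> t) integrable_on {u..v}"
  using absolutely_integrable_cnj_G_mult assms
  by (auto simp: absolutely_integrable_on_def intro: integrable_on_subinterval)

lemma norm_cnj_G_diff_le:
  assumes "u \<in> {a..b}" "s \<in> {a..b}" "norm (Q s - Q u) \<le> 1/2"
  shows "norm (cnj (G s) - cnj (G u)) \<le> 3/2 * norm (Q s - Q u)"
proof -
  have "norm (cnj (G s) - cnj (G u)) = norm (cnj (G u) * G s - cnj (G u) * G u)"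
    using norm_G[OF assms(1)] by (simp flip: complex_cnj_diff right_diff_distrib add: norm_mult)
  also have "\<dots> = norm (exp (Q s - Q u) - 1)"
    using cnj_G_mult_G[OF assms(1,2)] cnj_G_mult_G[OF assms(1,1)] by simp
  also have "\<dots> \<le> 3/2 * norm (Q s - Q u)"
    using assms(3) by (rule norm_exp_bounds(2))
  finally show ?thesis .
qed

text \<open>On a short interval, where \<open>Q\<close> stays within \<open>\<eta>\<close> of \<open>Q u\<close>, freezing \<open>cnj (G t)\<close> at
  \<open>t = u\<close> costs \<open>O(\<eta>)\<close> relative to \<open>\<integral>|\<phi>|\<close>, and the frozen integral is
  \<open>exp w - 1\<close> with \<open>w = Q v - Q u\<close>, which agrees with \<open>w\<close> up to \<open>O(|w|\<^sup>2)\<close>.\<close>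

lemma integral_cnj_G_mult_local:
  assumes uv: "a \<le> u" "u \<le> v" "v \<le> b" and "\<eta> \<le> 1/2"
    and close: "\<And>s. s \<in> {u..v} \<Longrightarrow> norm (Q s - Q u) \<le> \<eta>"
  shows "norm (integral {u..v} (\<lambda>t. cnj (G t) * \<phi> t) - (Q v - Q u))
           \<le> 9/2 * \<eta> * integral {u..v} (\<lambda>t. norm (\<phi> t))"
proof -
  define w where "w = Q v - Q u"
  define N where "N = integral {u..v} (\<lambda>t. norm (\<phi> t))"
  define R where "R = integral {u..v} (\<lambda>t. (cnj (G t) - cnj (G u)) * \<phi> t)"
  have ends: "u \<in> {a..b}" "v \<in> {a..b}" and "0 \<le> \<eta>"
    using uv close[of u] by auto
  have \<phi>I: "\<phi> integrable_on {u..v}" "(\<lambda>t. norm (\<phi> t)) integrable_on {u..v}"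
    using integrable_subinterval uv by auto
  have "cnj (G u) * integral {u..v} \<phi> = cnj (G u) * G v - cnj (G u) * G u"
    by (simp add: G_diff[OF uv, symmetric] right_diff_distrib)
  also have "\<dots> = exp w - 1"
    using cnj_G_mult_G[OF ends(1,1)] cnj_G_mult_G[OF ends] by (simp add: w_def)
  finally have "integral {u..v} (\<lambda>t. cnj (G t) * \<phi> t) - w = R + (exp w - 1 - w)"
    using integral_diff[OF integrable_cnj_G_mult[OF uv(1,3)] integrable_on_mult_right[OF \<phi>I(1)]]
    by (simp add: R_def left_diff_distrib)
  moreover have "norm R \<le> 3/2 * \<eta> * N"
  proof -
    have "norm R \<le> integral {u..v} (\<lambda>t. 3/2 * \<eta> * norm (\<phi> t))"
      unfolding R_def
    proof (rule integral_norm_bound_integral)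
      show "(\<lambda>t. (cnj (G t) - cnj (G u)) * \<phi> t) integrable_on {u..v}"
        using integrable_cnj_G_mult[OF uv(1,3)] \<phi>I(1)
        by (simp add: left_diff_distrib integrable_diff integrable_on_mult_right)
      show "(\<lambda>t. 3/2 * \<eta> * norm (\<phi> t)) integrable_on {u..v}"
        using \<phi>I(2) by (rule integrable_on_mult_right)
    next
      fix s assume s: "s \<in> {u..v}"
      then have "norm (cnj (G s) - cnj (G u)) \<le> 3/2 * \<eta>"
        using norm_cnj_G_diff_le[OF ends(1), of s] close[OF s] uv \<open>\<eta> \<le> 1/2\<close> by force
      then show "norm ((cnj (G s) - cnj (G u)) * \<phi> s) \<le> 3/2 * \<eta> * norm (\<phi> s)"
        unfolding norm_mult by (rule mult_right_mono) simp
    qed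
    then show ?thesis by (simp add: N_def)
  qed
  moreover have "norm (exp w - 1 - w) \<le> 3 * \<eta> * N"
  proof -
    have "norm w \<le> \<eta>" using close[of v] uv by (simp add: w_def)
    have "norm (exp w - 1) = norm (cnj (G u) * (G v - G u))"
      using cnj_G_mult_G[OF ends] cnj_G_mult_G[OF ends(1,1)] by (simp add: w_def right_diff_distrib)
    also have "\<dots> \<le> N"
      using norm_G[OF ends(1)] norm_G_diff_le[OF uv] by (simp add: N_def norm_mult)
    finally have "norm (exp w - 1) \<le> N" .
    have "norm (exp w - 1 - w) \<le> 3 * norm w * norm (exp w - 1)"
      using \<open>norm w \<le> \<eta>\<close> \<open>\<eta> \<le> 1/2\<close> by (intro norm_exp_minus_1_minus_le) simp
    also have "\<dots> \<le> 3 * \<eta> * N"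
      using \<open>norm w \<le> \<eta>\<close> \<open>norm (exp w - 1) \<le> N\<close> \<open>0 \<le> \<eta>\<close> by (intro mult_mono) auto
    finally show ?thesis .
  qed
  ultimately have "norm (integral {u..v} (\<lambda>t. cnj (G t) * \<phi> t) - w) \<le> 3/2 * \<eta> * N + 3 * \<eta> * N"
    using norm_triangle_ineq[of R "exp w - 1 - w"] by (simp only:)
  then show ?thesis
    unfolding N_def[symmetric] w_def[symmetric] by (simp add: algebra_simps)
qed

lemma integral_cnj_G_mult_defect_subadditive:
  assumes "a \<le> x" "x \<le> y" "y \<le> z" "z \<le> b"
  shows "norm (integral {x..z} (\<lambda>t. cnj (G t) * \<phi> t) - (Q z - Q x))
    \<le> norm (integral {x..y} (\<lambda>t. cnj (G t) * \<phi> t) - (Q y - Q x))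
      + norm (integral {y..z} (\<lambda>t. cnj (G t) * \<phi> t) - (Q z - Q y))"
proof -
  have "integral {x..z} (\<lambda>t. cnj (G t) * \<phi> t)
      = integral {x..y} (\<lambda>t. cnj (G t) * \<phi> t) + integral {y..z} (\<lambda>t. cnj (G t) * \<phi> t)"
    using integrable_cnj_G_mult[of x z] assms
    by (simp add: Henstock_Kurzweil_Integration.integral_combine)
  then have "integral {x..z} (\<lambda>t. cnj (G t) * \<phi> t) - (Q z - Q x)
      = (integral {x..y} (\<lambda>t. cnj (G t) * \<phi> t) - (Q y - Q x))
        + (integral {y..z} (\<lambda>t. cnj (G t) * \<phi> t) - (Q z - Q y))"
    by simp
  then show ?thesis
    by (metis norm_triangle_ineq)
qed

text \<open>The local estimate is additive, so Bolzano's lemma spreads it over the whole interval.\<close>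

lemma integral_cnj_G_mult_approx:
  assumes uv: "a \<le> u" "u \<le> v" "v \<le> b" and "0 < \<eta>" "\<eta> \<le> 1/2"
  shows "norm (integral {u..v} (\<lambda>t. cnj (G t) * \<phi> t) - (Q v - Q u))
           \<le> 9/2 * \<eta> * integral {u..v} (\<lambda>t. norm (\<phi> t))"
proof -
  define P where "P x y \<longleftrightarrow> norm (integral {x..y} (\<lambda>t. cnj (G t) * \<phi> t) - (Q y - Q x))
      \<le> 9/2 * \<eta> * integral {x..y} (\<lambda>t. norm (\<phi> t))" for x y
  have "u \<le> u \<longrightarrow> v \<le> v \<longrightarrow> P u v"
  proof (rule Bolzano[where P = "\<lambda>x y. u \<le> x \<longrightarrow> y \<le> v \<longrightarrow> P x y"])
    fix x y z assume "u \<le> x \<longrightarrow> y \<le> v \<longrightarrow> P x y" "u \<le> y \<longrightarrow> z \<le> v \<longrightarrow> P y z" "x \<le> y" "y \<le> z"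
    moreover have "integral {x..z} (\<lambda>t. norm (\<phi> t))
        = integral {x..y} (\<lambda>t. norm (\<phi> t)) + integral {y..z} (\<lambda>t. norm (\<phi> t))"
      if "u \<le> x" "z \<le> v"
      using that uv \<open>x \<le> y\<close> \<open>y \<le> z\<close> integrable_subinterval(2)[of x z]
      by (simp add: Henstock_Kurzweil_Integration.integral_combine)
    ultimately show "u \<le> x \<longrightarrow> z \<le> v \<longrightarrow> P x z"
      using integral_cnj_G_mult_defect_subadditive[of x y z] uv by (auto simp: P_def distrib_left)
  next
    fix x assume "u \<le> x" "x \<le> v"
    then have "x \<in> {a..b}" using uv by auto
    then obtain d where "0 < d" and d: "\<And>s. s \<in> {a..b} \<Longrightarrow> dist s x < d \<Longrightarrow> dist (Q s) (Q x) < \<eta>/2"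
      using continuous_lift \<open>0 < \<eta>\<close> unfolding continuous_on_iff by (metis half_gt_zero)
    have "P x' y'" if "x' \<le> x" "x \<le> y'" "y' - x' < d" "u \<le> x'" "y' \<le> v" for x' y'
      unfolding P_def
    proof (rule integral_cnj_G_mult_local)
      fix s assume "s \<in> {x'..y'}"
      then have "s \<in> {a..b}" "x' \<in> {a..b}" "dist s x < d" "dist x' x < d"
        using that uv by (auto simp: dist_real_def)
      then have "dist (Q s) (Q x) < \<eta>/2" "dist (Q x') (Q x) < \<eta>/2"
        by (meson d)+
      then show "norm (Q s - Q x') \<le> \<eta>"
        using norm_triangle_ineq4[of "Q s - Q x" "Q x' - Q x"] by (simp add: dist_norm)
    qed (use that uv \<open>\<eta> \<le> 1/2\<close> in auto)
    then show "\<exists>d>0. \<forall>x' y'. x' \<le> x \<and> x \<le> y' \<and> y' - x' < d \<longrightarrow> u \<le> x' \<longrightarrow> y' \<le> v \<longrightarrow> P x' y'"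
      using \<open>0 < d\<close> by blast
  qed (use uv in auto)
  then show ?thesis by (simp add: P_def)
qed

lemma integral_cnj_G_mult:
  assumes uv: "a \<le> u" "u \<le> v" "v \<le> b"
  shows "integral {u..v} (\<lambda>t. cnj (G t) * \<phi> t) = Q v - Q u"
proof -
  define N where "N = integral {u..v} (\<lambda>t. norm (\<phi> t))"
  have "0 \<le> N"
    using uv integrable_subinterval(2)[of u v] by (auto simp: N_def intro: integral_nonneg)
  have "norm (integral {u..v} (\<lambda>t. cnj (G t) * \<phi> t) - (Q v - Q u)) \<le> 0 + e" if "0 < e" for e
  proof -
    define \<eta> where "\<eta> = min (1/2) (e / (5 * (N + 1)))"
    have "\<eta> * N \<le> e / (5 * (N + 1)) * N"
      using \<open>0 \<le> N\<close> by (intro mult_right_mono) (auto simp: \<eta>_def)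
    also have "\<dots> \<le> e / 5"
      using \<open>0 < e\<close> \<open>0 \<le> N\<close> by (simp add: field_simps)
    finally have "\<eta> * N \<le> e / 5" .
    moreover have "0 < \<eta>"
      using \<open>0 < e\<close> \<open>0 \<le> N\<close> by (simp add: \<eta>_def)
    moreover have "\<eta> \<le> 1/2"
      unfolding \<eta>_def by (rule min.cobounded1)
    ultimately show ?thesis
      using integral_cnj_G_mult_approx[OF uv, of \<eta>] \<open>0 < e\<close> by (simp add: N_def mult.assoc)
  qed
  then have "norm (integral {u..v} (\<lambda>t. cnj (G t) * \<phi> t) - (Q v - Q u)) \<le> 0"
    by (rule field_le_epsilon)
  then show ?thesis by simp
qed

lemma AE_Re_cnj_G_mult_eq_0: "AE t in lebesgue. t \<in> {a..b} \<longrightarrow> Re (cnj (G t) * \<phi> t) = 0"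
proof -
  have "AE t in lebesgue. t \<in> cbox a b \<longrightarrow> Re (cnj (G t) * \<phi> t) = 0"
  proof (rule AE_eq_0_if_box_integrals_eq_0)
    show "(\<lambda>t. Re (cnj (G t) * \<phi> t)) absolutely_integrable_on cbox a b"
      using absolutely_integrable_linear[OF absolutely_integrable_cnj_G_mult bounded_linear_Re]
      by (simp add: o_def)
  next
    fix u v assume uv: "cbox u v \<subseteq> cbox a b"
    show "integral (cbox u v) (\<lambda>t. Re (cnj (G t) * \<phi> t)) = 0"
    proof (cases "u \<le> v")
      case False
      then have "cbox u v = {}" by simp
      then show ?thesis by (simp only: integral_empty)
    next
      case True
      then have "a \<le> u" "v \<le> b" using uv by simp_all
      then have "integral {u..v} (\<lambda>t. Re (cnj (G t) * \<phi> t))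
          = Re (integral {u..v} (\<lambda>t. cnj (G t) * \<phi> t))"
        using integral_linear[OF integrable_cnj_G_mult bounded_linear_Re] by (simp only: o_def)
      also have "\<dots> = Re (Q v - Q u)"
        using integral_cnj_G_mult[OF \<open>a \<le> u\<close> True \<open>v \<le> b\<close>] by (simp only:)
      also have "\<dots> = 0"
        using Re_lift \<open>a \<le> u\<close> True \<open>v \<le> b\<close> by simp
      finally show ?thesis by (simp only: cbox_interval)
    qed
  qed
  then show ?thesis by (simp only: cbox_interval)
qed

end

section \<open>Sobolev maps of the circle into itself\<close>

lemma W11_S1_norm: "W11_S1 f df \<Longrightarrow> norm (f (cis t)) = 1"
  unfolding W11_S1_def by simp

lemma W11_S1_continuous:
  assumes "W11_S1 f df"
  shows "continuous_on {0..2*pi} (\<lambda>t. f (cis t))"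
proof -
  have "df integrable_on {0..2*pi}"
    using assms by (simp add: W11_S1_def absolutely_integrable_on_def)
  then have "continuous_on {0..2*pi} (\<lambda>t. f 1 + integral {0..t} df)"
    by (intro continuous_intros indefinite_integral_continuous_1)
  then show ?thesis
    by (rule continuous_on_eq) (use assms in \<open>simp add: W11_S1_def\<close>)
qed

lemma W11_S1_lift:
  assumes W: "W11_S1 f df"
  obtains Q where "unit_primitive_lift 0 (2*pi) (\<lambda>t. f (cis t)) df Q"
    and "Q (2*pi) - Q 0 = 2 * pi * \<i> * deg f"
proof -
  define p where "p = (\<lambda>x. f (cis (2*pi*x)))"
  have "(\<lambda>x. 2*pi*x) ` {0..1} \<subseteq> {0..2*pi}"
    by (auto simp: mult_le_cancel_left1)
  then have "path p"
    unfolding path_def p_def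
    by (intro continuous_on_compose2[OF W11_S1_continuous[OF W]] continuous_intros)
  moreover have "0 \<notin> path_image p"
  proof
    assume "0 \<in> path_image p"
    then obtain x where "f (cis (2*pi*x)) = 0"
      by (auto simp: path_image_def p_def)
    then show False
      using W11_S1_norm[OF W, of "2*pi*x"] by simp
  qed
  ultimately obtain q where "path q"
    and q_diff: "pathfinish q - pathstart q = 2 * of_real pi * \<i> * winding_number p 0"
    and q: "\<And>x. x \<in> {0..1} \<Longrightarrow> p x = 0 + exp (q x)"
    by (rule winding_number_as_continuous_log) blast
  define Q where "Q t = q (t / (2*pi))" for t
  have "unit_primitive_lift 0 (2*pi) (\<lambda>t. f (cis t)) df Q"
  proof
    show "df absolutely_integrable_on {0..2*pi}"
      "\<And>t. t \<in> {0..2*pi} \<Longrightarrow> f (cis t) = f (cis 0) + integral {0..t} df"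
      using W by (simp_all add: W11_S1_def)
    show lift: "f (cis t) = exp (Q t)" if "t \<in> {0..2*pi}" for t
    proof -
      have "t / (2*pi) \<in> {0..1}"
        using that by (auto simp: field_simps)
      from q[OF this] show ?thesis
        by (simp add: p_def Q_def)
    qed
    show "Re (Q t) = 0" if "t \<in> {0..2*pi}" for t
      using W11_S1_norm[OF W, of t] lift[OF that] by (simp add: norm_exp_eq_Re)
    have "continuous_on {0..1} q"
      using \<open>path q\<close> by (simp add: path_def)
    moreover have "continuous_on {0..2*pi} (\<lambda>t. t / (2*pi))"
      by (intro continuous_intros) simp
    moreover have "(\<lambda>t. t / (2*pi)) ` {0..2*pi} \<subseteq> {0..1}"
      by (auto simp: field_simps)
    ultimately show "continuous_on {0..2*pi} Q"
      unfolding Q_def by (rule continuous_on_compose2)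
  qed
  moreover have "Q (2*pi) - Q 0 = 2 * pi * \<i> * deg f"
    using q_diff unfolding deg_def p_def[symmetric]
    by (simp add: Q_def pathfinish_def pathstart_def)
  ultimately show ?thesis by (rule that)
qed

lemma W11_S1_has_integral_wedge:
  assumes "W11_S1 f df" "deg f = of_int d"
  shows "(wedge f df has_integral 2 * pi * d) {0..2*pi}"
proof -
  obtain Q where lift: "unit_primitive_lift 0 (2*pi) (\<lambda>t. f (cis t)) df Q"
    and Q: "Q (2*pi) - Q 0 = 2 * pi * \<i> * deg f"
    using W11_S1_lift[OF assms(1)] by blast
  interpret unit_primitive_lift 0 "2*pi" "\<lambda>t. f (cis t)" df Q
    by (fact lift)
  have "((\<lambda>t. cnj (f (cis t)) * df t) has_integral 2 * pi * \<i> * d) {0..2*pi}"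
    using absolutely_integrable_cnj_G_mult integral_cnj_G_mult[of 0 "2*pi"] Q assms(2)
    by (simp add: has_integral_integral absolutely_integrable_on_def)
  from has_integral_Im[OF this] show ?thesis
    by (simp add: wedge_def[abs_def])
qed

lemma W11_S1_tangent:
  assumes "W11_S1 f df"
  shows "AE t in lebesgue. t \<in> {0..2*pi} \<longrightarrow> Re (cnj (f (cis t)) * df t) = 0"
proof -
  obtain Q where "unit_primitive_lift 0 (2*pi) (\<lambda>t. f (cis t)) df Q"
    using W11_S1_lift[OF assms] by blast
  then show ?thesis by (rule unit_primitive_lift.AE_Re_cnj_G_mult_eq_0)
qed

lemma deg_eq_if_AE_eq:
  assumes "W11_S1 f df" "W11_S1 g dg" "AE t in lebesgue. t \<in> {0..2*pi} \<longrightarrow> f (cis t) = g (cis t)"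
  shows "deg f = deg g"
proof -
  have eq: "\<forall>t\<in>{0..2*pi}. f (cis t) = g (cis t)"
    using assms by (intro continuous_on_eq_if_AE_eq W11_S1_continuous) auto
  show ?thesis
    unfolding deg_def
  proof (rule winding_number_cong)
    fix t :: real assume "0 \<le> t" "t \<le> 1"
    then show "f (cis (2*pi*t)) = g (cis (2*pi*t))"
      using eq by (simp add: mult_le_cancel_left1)
  qed
qed

lemma
  assumes f: "W11_S1 f df" "deg f = of_int d1" and g: "W11_S1 g dg" "deg g = of_int d2"
    and s: "s = 1 \<or> s = -1" and sign: "AE t in lebesgue. t \<in> {0..2*pi} \<longrightarrow> 0 \<le> s * wedge f df t"
  shows W11_S1_integral_norm_diff_ge:
      "2 * pi * s * real_of_int (d2 - d1) \<le> integral {0..2*pi} (\<lambda>t. cmod (df t - dg t))"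
    and W11_S1_AE_eq_if_integral_norm_diff_eq:
      "integral {0..2*pi} (\<lambda>t. cmod (df t - dg t)) = 2 * pi * s * real_of_int (d2 - d1) \<Longrightarrow>
       AE t in lebesgue. t \<in> {0..2*pi} \<longrightarrow> 0 < s * wedge f df t \<longrightarrow> f (cis t) = g (cis t)"
proof -
  define H where "H t = cmod (df t - dg t) - (s * wedge g dg t - s * wedge f df t)" for t
  have "(\<lambda>t. df t - dg t) absolutely_integrable_on {0..2*pi}"
    using f g by (auto simp: W11_S1_def)
  then have "((\<lambda>t. cmod (df t - dg t)) has_integral integral {0..2*pi} (\<lambda>t. cmod (df t - dg t)))
      {0..2*pi}"
    by (auto simp: absolutely_integrable_on_def intro: integrable_integral)
  moreover have "((\<lambda>t. s * wedge g dg t - s * wedge f df t) has_integral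
      s * (2 * pi * d2) - s * (2 * pi * d1)) {0..2*pi}"
    using W11_S1_has_integral_wedge[OF g] W11_S1_has_integral_wedge[OF f]
    by (intro has_integral_diff has_integral_mult_right)
  ultimately have "(H has_integral (integral {0..2*pi} (\<lambda>t. cmod (df t - dg t))
      - (s * (2 * pi * d2) - s * (2 * pi * d1)))) {0..2*pi}"
    unfolding H_def by (rule has_integral_diff)
  then have H_integrable: "H integrable_on {0..2*pi}"
    and H_integral: "integral {0..2*pi} H
      = integral {0..2*pi} (\<lambda>t. cmod (df t - dg t)) - 2 * pi * s * real_of_int (d2 - d1)"
    by (auto simp: integral_unique algebra_simps)
  have H_nonneg: "AE t in lebesgue. t \<in> {0..2*pi} \<longrightarrow> 0 \<le> H t"
    using W11_S1_tangent[OF f(1)] sign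
  proof eventually_elim
    case (elim t)
    then show ?case
      using norm_diff_ge_if_tangent[OF W11_S1_norm[OF f(1)] W11_S1_norm[OF g(1)] _ s,
          where a = "df t" and b = "dg t"]
      by (auto simp: H_def wedge_def)
  qed
  then show "2 * pi * s * real_of_int (d2 - d1) \<le> integral {0..2*pi} (\<lambda>t. cmod (df t - dg t))"
    using integral_nonneg_AE_on[OF H_integrable] H_integral by linarith
  assume "integral {0..2*pi} (\<lambda>t. cmod (df t - dg t)) = 2 * pi * s * real_of_int (d2 - d1)"
  then have "AE t in lebesgue. t \<in> {0..2*pi} \<longrightarrow> H t = 0"
    using AE_eq_0_if_integral_eq_0[OF H_integrable H_nonneg] H_integral by simp
  with W11_S1_tangent[OF f(1)] W11_S1_tangent[OF g(1)]
  show "AE t in lebesgue. t \<in> {0..2*pi} \<longrightarrow> 0 < s * wedge f df t \<longrightarrow> f (cis t) = g (cis t)"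
  proof eventually_elim
    case (elim t)
    then show ?case
      using eq_if_tangent_norm_diff_le[OF W11_S1_norm[OF f(1)] W11_S1_norm[OF g(1)] _ _ s,
          where a = "df t" and b = "dg t"]
      by (auto simp: H_def wedge_def)
  qed
qed

theorem lemma3p3:
  fixes d1 d2 :: int and f :: "complex \<Rightarrow> complex" and df :: "real \<Rightarrow> complex"
  assumes "d1 * (d2 - d1) > 0"
    and "W11_S1 f df" and "deg f = of_int d1"
    and "AE t in lborel. t \<in> {0..2*pi} \<longrightarrow> real_of_int d1 * wedge f df t \<ge> 0"
  shows "(\<forall>g dg. W11_S1 g dg \<and> deg g = of_int d2 \<longrightarrow>
            integral {0..2*pi} (\<lambda>t. cmod (df t - dg t)) \<ge> 2*pi*\<bar>real_of_int (d1 - d2)\<bar>)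
       \<and> ((AE t in lborel. t \<in> {0..2*pi} \<longrightarrow> real_of_int d1 * wedge f df t > 0) \<longrightarrow>
          (\<forall>g dg. W11_S1 g dg \<and> deg g = of_int d2 \<longrightarrow>
            integral {0..2*pi} (\<lambda>t. cmod (df t - dg t)) > 2*pi*\<bar>real_of_int (d1 - d2)\<bar>))"
proof -
  define s where "s = sgn (real_of_int d1)"
  have s: "s = 1 \<or> s = -1"
    using assms(1) by (auto simp: s_def sgn_if)
  have distance: "2 * pi * s * real_of_int (d2 - d1) = 2*pi*\<bar>real_of_int (d1 - d2)\<bar>"
    using assms(1) by (auto simp: s_def sgn_if zero_less_mult_iff)
  have sign: "0 \<le> real_of_int d1 * w \<longleftrightarrow> 0 \<le> s * w" "0 < real_of_int d1 * w \<longleftrightarrow> 0 < s * w" for w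
    using assms(1) by (auto simp: s_def sgn_if zero_le_mult_iff zero_less_mult_iff)
  have "AE t in lebesgue. t \<in> {0..2*pi} \<longrightarrow> 0 \<le> s * wedge f df t"
    using AE_completion[OF assms(4)] by (simp add: sign)
  note bounds = W11_S1_integral_norm_diff_ge[OF assms(2,3) _ _ s this]
    W11_S1_AE_eq_if_integral_norm_diff_eq[OF assms(2,3) _ _ s this]
  show ?thesis
  proof (intro conjI allI impI; elim conjE)
    fix g dg assume g: "W11_S1 g dg" "deg g = of_int d2"
    show "2*pi*\<bar>real_of_int (d1 - d2)\<bar> \<le> integral {0..2*pi} (\<lambda>t. cmod (df t - dg t))"
      using bounds(1)[OF g] distance by linarith
  next
    fix g dg assume g: "W11_S1 g dg" "deg g = of_int d2"
      and strict: "AE t in lborel. t \<in> {0..2*pi} \<longrightarrow> real_of_int d1 * wedge f df t > 0"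
    show "2*pi*\<bar>real_of_int (d1 - d2)\<bar> < integral {0..2*pi} (\<lambda>t. cmod (df t - dg t))"
    proof (rule ccontr)
      assume "\<not> ?thesis"
      then have "integral {0..2*pi} (\<lambda>t. cmod (df t - dg t)) = 2 * pi * s * real_of_int (d2 - d1)"
        using bounds(1)[OF g] distance by linarith
      from bounds(2)[OF g this] AE_completion[OF strict]
      have "AE t in lebesgue. t \<in> {0..2*pi} \<longrightarrow> f (cis t) = g (cis t)"
        by eventually_elim (simp add: sign)
      then have "deg f = deg g"
        by (rule deg_eq_if_AE_eq[OF assms(2) g(1)])
      then show False
        using assms(1,3) g(2) by auto
    qed
  qed
qed

end
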